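(* If a graph $G$ is a $k$-interval-PCG, then its complement $\overline{G}$ is a $(k+1)$-interval-PCG.
   Context: All trees are unrooted with edges weighted by nonnegative reals; $d_T(u,v)$ is the weight of the path between leaves $u,v$ of $T$. A graph $G$ is a $k$-interval-PCG if there exist a tree $T$ whose leaf set is $V(G)$ and $k$ pairwise disjoint intervals $I_1,\ldots,I_k$ of nonnegative reals such that $\{u,v\}\in E(G)$ iff $d_T(u,v)\in I_i$ for some $i$. The complement $\overline{G}$ has vertex set $V(G)$ and as edges exactly the non-edges of $G$. *)

theory Defs
  imports "HOL-Analysis.Analysis"
begin

definition simple_graph :: "'a set \<Rightarrow> 'a set set \<Rightarrow> bool" where
  "simple_graph V E \<longleftrightarrow> finite V \<and>
     (\<forall>e\<in>E. \<exists>u v. u \<in> V \<and> v \<in> V \<and> u \<noteq> v \<and> e = {u, v})"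

definition graph_complement :: "'a set \<Rightarrow> 'a set set \<Rightarrow> 'a set set" where
  "graph_complement V E = {{u, v} | u v. u \<in> V \<and> v \<in> V \<and> u \<noteq> v \<and> {u, v} \<notin> E}"

definition is_tree_path :: "'n set \<Rightarrow> 'n set set \<Rightarrow> 'n list \<Rightarrow> 'n \<Rightarrow> 'n \<Rightarrow> bool" where
  "is_tree_path TN TE p u v \<longleftrightarrow> p \<noteq> [] \<and> hd p = u \<and> last p = v \<and> distinct p \<and>
     set p \<subseteq> TN \<and> (\<forall>i. Suc i < length p \<longrightarrow> {p ! i, p ! Suc i} \<in> TE)"

definition weighted_tree :: "'n set \<Rightarrow> 'n set set \<Rightarrow> ('n set \<Rightarrow> real) \<Rightarrow> bool" where
  "weighted_tree TN TE w \<longleftrightarrow> finite TN \<and> TN \<noteq> {} \<and>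
     (\<forall>e\<in>TE. \<exists>x y. x \<in> TN \<and> y \<in> TN \<and> x \<noteq> y \<and> e = {x, y}) \<and>
     (\<forall>e\<in>TE. 0 \<le> w e) \<and>
     (\<forall>u\<in>TN. \<forall>v\<in>TN. \<exists>!p. is_tree_path TN TE p u v)"

definition path_weight :: "('n set \<Rightarrow> real) \<Rightarrow> 'n list \<Rightarrow> real" where
  "path_weight w p = (\<Sum>i < length p - 1. w {p ! i, p ! Suc i})"

definition tree_dist :: "'n set \<Rightarrow> 'n set set \<Rightarrow> ('n set \<Rightarrow> real) \<Rightarrow> 'n \<Rightarrow> 'n \<Rightarrow> real" where
  "tree_dist TN TE w u v = path_weight w (THE p. is_tree_path TN TE p u v)"

definition tree_leaves :: "'n set \<Rightarrow> 'n set set \<Rightarrow> 'n set" where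
  "tree_leaves TN TE = {x \<in> TN. card {e \<in> TE. x \<in> e} \<le> 1}"

text \<open>Tree nodes have type 'a + nat: the leaves are exactly the
  copies Inl v of the graph vertices, internal nodes are Inr i (w.l.o.g.).\<close>
definition k_interval_PCG :: "nat \<Rightarrow> 'a set \<Rightarrow> 'a set set \<Rightarrow> bool" where
  "k_interval_PCG k V E \<longleftrightarrow> simple_graph V E \<and>
     (\<exists>(TN :: ('a + nat) set) TE w (I :: nat \<Rightarrow> real set).
        weighted_tree TN TE w \<and> tree_leaves TN TE = Inl ` V \<and>
        (\<forall>i<k. is_interval (I i) \<and> I i \<subseteq> {0..}) \<and>
        (\<forall>i<k. \<forall>j<k. i \<noteq> j \<longrightarrow> I i \<inter> I j = {}) \<and>
        (\<forall>u\<in>V. \<forall>v\<in>V. u \<noteq> v \<longrightarrow>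
           ({u, v} \<in> E \<longleftrightarrow> (\<exists>i<k. tree_dist TN TE w (Inl u) (Inl v) \<in> I i))))"

end

theory Submission
  imports Defs
begin

text \<open>The same tree works for the complement: a pair is a non-edge of G iff its distance lies
  in the complement S of the union of the k intervals within the nonnegative reals.
  Removing a convex set C from a disjoint family of intervals splits at most one member in
  two (only a member containing C can reach past both sides of C), so by induction S is
  the disjoint union of k + 1 intervals.\<close>

definition strict_lower_bounds :: "real set \<Rightarrow> real set" where
  "strict_lower_bounds C = {x. \<forall>c\<in>C. x < c}"

definition strict_upper_bounds :: "real set \<Rightarrow> real set" where
  "strict_upper_bounds C = {x. \<forall>c\<in>C. c < x}"

lemma is_interval_strict_lower_bounds: "is_interval (strict_lower_bounds C)"
  unfolding strict_lower_bounds_def is_interval_1 by force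

lemma is_interval_strict_upper_bounds: "is_interval (strict_upper_bounds C)"
  unfolding strict_upper_bounds_def is_interval_1 by force

lemma strict_lower_upper_bounds_disjoint:
  "C \<noteq> {} \<Longrightarrow> strict_lower_bounds C \<inter> strict_upper_bounds C = {}"
  unfolding strict_lower_bounds_def strict_upper_bounds_def by force

lemma Compl_interval_eq:
  assumes "is_interval C"
  shows "- C = strict_lower_bounds C \<union> strict_upper_bounds C"
proof (intro equalityI subsetI)
  fix x assume "x \<in> - C"
  show "x \<in> strict_lower_bounds C \<union> strict_upper_bounds C"
  proof (rule ccontr)
    assume "x \<notin> strict_lower_bounds C \<union> strict_upper_bounds C"
    then obtain a b where "a \<in> C" "a \<le> x" "b \<in> C" "x \<le> b"
      unfolding strict_lower_bounds_def strict_upper_bounds_def by (auto simp: not_less)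
    with assms \<open>x \<in> - C\<close> show False unfolding is_interval_1 by blast
  qed
qed (auto simp: strict_lower_bounds_def strict_upper_bounds_def)

lemma interval_subset_if_meets_both_sides:
  assumes "is_interval J" "J \<inter> strict_lower_bounds C \<noteq> {}" "J \<inter> strict_upper_bounds C \<noteq> {}"
  shows "C \<subseteq> J"
proof
  fix c assume "c \<in> C"
  obtain l r where "l \<in> J" "l < c" "r \<in> J" "c < r"
    using assms(2,3) \<open>c \<in> C\<close> unfolding strict_lower_bounds_def strict_upper_bounds_def by blast
  with assms(1) show "c \<in> J" unfolding is_interval_1 by (meson less_imp_le)
qed

lemma is_interval_Diff_interval:
  assumes "is_interval J" "is_interval C"
    and "J \<inter> strict_lower_bounds C = {} \<or> J \<inter> strict_upper_bounds C = {}"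
  shows "is_interval (J - C)"
proof -
  have "J - C = J \<inter> strict_lower_bounds C \<union> J \<inter> strict_upper_bounds C"
    using Compl_interval_eq[OF assms(2)] by blast
  with assms(3) show ?thesis
    using is_interval_Int[OF assms(1) is_interval_strict_lower_bounds]
      is_interval_Int[OF assms(1) is_interval_strict_upper_bounds]
    by auto
qed

lemma disjoint_family_on_split_member:
  assumes "disjoint_family_on J {..<m}" "a < m" "A \<union> B \<subseteq> J a" "A \<inter> B = {}"
  shows "disjoint_family_on (J(a := A, m := B)) {..<Suc m}"
  unfolding disjoint_family_on_def
proof (intro ballI impI)
  fix i j assume ij: "i \<in> {..<Suc m}" "j \<in> {..<Suc m}" "i \<noteq> j"
  define f where "f l = (if l = m then a else l)" for l
  have sub: "(J(a := A, m := B)) l \<subseteq> J (f l)" for l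
    using assms(3) unfolding f_def by auto
  show "(J(a := A, m := B)) i \<inter> (J(a := A, m := B)) j = {}"
  proof (cases "f i = f j")
    case True
    with ij(3) assms(2) have "(i = a \<and> j = m) \<or> (i = m \<and> j = a)"
      unfolding f_def by (auto split: if_splits)
    with assms(2,4) show ?thesis by auto
  next
    case False
    moreover have "f i \<in> {..<m}" "f j \<in> {..<m}"
      using ij assms(2) unfolding f_def by auto
    ultimately have "J (f i) \<inter> J (f j) = {}"
      using assms(1) by (blast dest: disjoint_family_onD)
    with sub show ?thesis by blast
  qed
qed

definition interval_decomposition :: "nat \<Rightarrow> (nat \<Rightarrow> real set) \<Rightarrow> real set \<Rightarrow> bool" where
  "interval_decomposition m J S \<longleftrightarrow>
     (\<forall>j<m. is_interval (J j)) \<and> disjoint_family_on J {..<m} \<and> (\<Union>j<m. J j) = S"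

lemma interval_decomposition_Diff_split_member:
  assumes J: "interval_decomposition m J S" and C: "is_interval C" "C \<noteq> {}"
    and a: "a < m" "J a \<inter> strict_lower_bounds C \<noteq> {}" "J a \<inter> strict_upper_bounds C \<noteq> {}"
  shows "interval_decomposition (Suc m)
    (J(a := J a \<inter> strict_lower_bounds C, m := J a \<inter> strict_upper_bounds C)) (S - C)"
proof -
  define L R where "L = J a \<inter> strict_lower_bounds C" and "R = J a \<inter> strict_upper_bounds C"
  have Ja: "is_interval (J a)" using J a(1) unfolding interval_decomposition_def by blast
  have "C \<subseteq> J a" by (rule interval_subset_if_meets_both_sides[OF Ja a(2,3)])
  then have C_off: "J j \<inter> C = {}" if "j < m" "j \<noteq> a" for j
    using J a(1) that unfolding interval_decomposition_def disjoint_family_on_def by blast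
  have LR: "L \<union> R = J a - C" "L \<inter> R = {}"
    using Compl_interval_eq[OF C(1)] strict_lower_upper_bounds_disjoint[OF C(2)]
    unfolding L_def R_def by blast+
  have "is_interval L" "is_interval R"
    unfolding L_def R_def using Ja is_interval_strict_lower_bounds is_interval_strict_upper_bounds
    by (blast intro: is_interval_Int)+
  with J have "\<forall>j<Suc m. is_interval ((J(a := L, m := R)) j)"
    unfolding interval_decomposition_def by (simp add: less_Suc_eq)
  moreover have "disjoint_family_on (J(a := L, m := R)) {..<Suc m}"
    using disjoint_family_on_split_member[OF _ a(1) _ LR(2)] J LR(1)
    unfolding interval_decomposition_def by blast
  moreover have "(\<Union>j<Suc m. (J(a := L, m := R)) j) = S - C"
  proof -
    have "(\<Union>j<Suc m. (J(a := L, m := R)) j) = (\<Union>j\<in>{..<m} - {a}. J j) \<union> (L \<union> R)"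
      using a(1) unfolding lessThan_Suc by auto
    also have "\<dots> = (\<Union>j<m. J j) - C"
      using a(1) C_off LR(1) by blast
    finally show ?thesis using J unfolding interval_decomposition_def by simp
  qed
  ultimately show ?thesis unfolding interval_decomposition_def L_def R_def by blast
qed

lemma interval_decomposition_Diff:
  assumes J: "interval_decomposition m J S" and "\<forall>j<m. is_interval (J j - C)"
  shows "interval_decomposition (Suc m) ((\<lambda>j. J j - C)(m := {})) (S - C)"
proof -
  have "\<forall>j<Suc m. is_interval (((\<lambda>j. J j - C)(m := {})) j)"
    using assms(2) by (simp add: less_Suc_eq)
  moreover have "disjoint_family_on ((\<lambda>j. J j - C)(m := {})) {..<Suc m}"
    unfolding disjoint_family_on_def
  proof (intro ballI impI)
    fix i j assume "i \<in> {..<Suc m}" "j \<in> {..<Suc m}" "i \<noteq> j"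
    with J show "((\<lambda>j. J j - C)(m := {})) i \<inter> ((\<lambda>j. J j - C)(m := {})) j = {}"
      unfolding interval_decomposition_def by (auto simp: less_Suc_eq dest: disjoint_family_onD)
  qed
  moreover have "(\<Union>j<Suc m. ((\<lambda>j. J j - C)(m := {})) j) = S - C"
    using J unfolding interval_decomposition_def lessThan_Suc by auto
  ultimately show ?thesis unfolding interval_decomposition_def by blast
qed

lemma interval_decomposition_Diff_interval:
  assumes J: "interval_decomposition m J S" and C: "is_interval C"
  shows "\<exists>J'. interval_decomposition (Suc m) J' (S - C)"
proof (cases "C \<noteq> {} \<and>
    (\<exists>a<m. J a \<inter> strict_lower_bounds C \<noteq> {} \<and> J a \<inter> strict_upper_bounds C \<noteq> {})")
  case True
  then show ?thesis
    using interval_decomposition_Diff_split_member[OF J C] by blast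
next
  case False
  have "is_interval (J j - C)" if "j < m" for j
  proof (cases "C = {}")
    case True
    then show ?thesis using J that unfolding interval_decomposition_def by simp
  next
    case False
    with \<open>\<not> (C \<noteq> {} \<and> _)\<close> that
    have "J j \<inter> strict_lower_bounds C = {} \<or> J j \<inter> strict_upper_bounds C = {}"
      by blast
    with J C that show ?thesis
      unfolding interval_decomposition_def by (blast intro: is_interval_Diff_interval)
  qed
  then show ?thesis
    using interval_decomposition_Diff[OF J] by blast
qed

lemma interval_decomposition_nonneg_Diff_UN:
  fixes I :: "nat \<Rightarrow> real set"
  assumes "\<forall>i<k. is_interval (I i)"
  shows "\<exists>J. interval_decomposition (Suc k) J ({0..} - (\<Union>i<k. I i))"
  using assms
proof (induction k)
  case 0
  have "interval_decomposition 1 (\<lambda>_. {0..}) {0..}"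
    unfolding interval_decomposition_def disjoint_family_on_def by (auto simp: is_interval_1)
  then show ?case by auto
next
  case (Suc k)
  then obtain J where "interval_decomposition (Suc k) J ({0..} - (\<Union>i<k. I i))" by auto
  from interval_decomposition_Diff_interval[OF this, of "I k"] Suc.prems
  show ?case by (simp add: lessThan_Suc Diff_eq Int_ac)
qed

lemma obtain_interval_decomposition_nonneg_Diff_UN:
  fixes I :: "nat \<Rightarrow> real set"
  assumes "\<forall>i<k. is_interval (I i)"
  obtains J where "\<forall>j<k + 1. is_interval (J j) \<and> J j \<subseteq> {0..}"
    and "\<forall>i<k + 1. \<forall>j<k + 1. i \<noteq> j \<longrightarrow> J i \<inter> J j = {}"
    and "\<And>x. (\<exists>j<k + 1. x \<in> J j) \<longleftrightarrow> 0 \<le> x \<and> \<not> (\<exists>i<k. x \<in> I i)"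
proof -
  obtain J where J_int: "\<forall>j<k + 1. is_interval (J j)" and J_disj: "disjoint_family_on J {..<k + 1}"
    and J_union: "(\<Union>j<k + 1. J j) = {0..} - (\<Union>i<k. I i)"
    using interval_decomposition_nonneg_Diff_UN[OF assms]
    unfolding interval_decomposition_def by auto
  have mem_J_iff: "(\<exists>j<k + 1. x \<in> J j) \<longleftrightarrow> 0 \<le> x \<and> \<not> (\<exists>i<k. x \<in> I i)" for x
  proof -
    have "(\<exists>j<k + 1. x \<in> J j) \<longleftrightarrow> x \<in> (\<Union>j<k + 1. J j)" by blast
    then show ?thesis unfolding J_union by auto
  qed
  show ?thesis
  proof (rule that)
    have "J j \<subseteq> {0..}" if "j < k + 1" for j
    proof -
      have "J j \<subseteq> (\<Union>j<k + 1. J j)" using that by blast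
      then show ?thesis unfolding J_union by blast
    qed
    with J_int show "\<forall>j<k + 1. is_interval (J j) \<and> J j \<subseteq> {0..}" by blast
    show "\<forall>i<k + 1. \<forall>j<k + 1. i \<noteq> j \<longrightarrow> J i \<inter> J j = {}"
      using disjoint_family_onD[OF J_disj] by simp
  qed (rule mem_J_iff)
qed

lemma tree_dist_nonneg:
  assumes "weighted_tree TN TE w" "u \<in> TN" "v \<in> TN"
  shows "0 \<le> tree_dist TN TE w u v"
proof -
  define p where "p = (THE p. is_tree_path TN TE p u v)"
  have "\<exists>!p. is_tree_path TN TE p u v"
    using assms unfolding weighted_tree_def by blast
  then have "is_tree_path TN TE p u v"
    unfolding p_def by (rule theI')
  then have "\<forall>i < length p - 1. {p ! i, p ! Suc i} \<in> TE"
    unfolding is_tree_path_def by auto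
  moreover have "\<forall>e\<in>TE. 0 \<le> w e"
    using assms(1) unfolding weighted_tree_def by blast
  ultimately show ?thesis
    unfolding tree_dist_def p_def[symmetric] path_weight_def by (intro sum_nonneg) auto
qed

lemma tree_leaves_subset: "tree_leaves TN TE \<subseteq> TN"
  unfolding tree_leaves_def by blast

lemma simple_graph_complement: "simple_graph V E \<Longrightarrow> simple_graph V (graph_complement V E)"
  unfolding simple_graph_def graph_complement_def by blast

lemma doubleton_in_graph_complement_iff:
  assumes "u \<in> V" "v \<in> V" "u \<noteq> v"
  shows "{u, v} \<in> graph_complement V E \<longleftrightarrow> {u, v} \<notin> E"
proof
  assume "{u, v} \<in> graph_complement V E"
  then obtain a b where "{u, v} = {a, b}" "{a, b} \<notin> E"
    unfolding graph_complement_def by blast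
  then show "{u, v} \<notin> E" by simp
qed (use assms in \<open>auto simp: graph_complement_def\<close>)

theorem lemma3:
  fixes V :: "'a set" and E :: "'a set set" and k :: nat
  assumes "k_interval_PCG k V E"
  shows "k_interval_PCG (k + 1) V (graph_complement V E)"
proof -
  obtain TN :: "('a + nat) set" and TE w and I :: "nat \<Rightarrow> real set" where
    G: "simple_graph V E" and T: "weighted_tree TN TE w" and leaves: "tree_leaves TN TE = Inl ` V"
    and I: "\<forall>i<k. is_interval (I i) \<and> I i \<subseteq> {0..}"
    and E: "\<forall>u\<in>V. \<forall>v\<in>V. u \<noteq> v \<longrightarrow>
              ({u, v} \<in> E \<longleftrightarrow> (\<exists>i<k. tree_dist TN TE w (Inl u) (Inl v) \<in> I i))"
    using assms unfolding k_interval_PCG_def by (elim conjE exE) (rule that)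
  have "\<forall>i<k. is_interval (I i)" using I by blast
  then obtain J where intervals: "\<forall>j<k + 1. is_interval (J j) \<and> J j \<subseteq> {0..}"
    and disjoint: "\<forall>i<k + 1. \<forall>j<k + 1. i \<noteq> j \<longrightarrow> J i \<inter> J j = {}"
    and mem_J_iff: "\<And>x. (\<exists>j<k + 1. x \<in> J j) \<longleftrightarrow> 0 \<le> x \<and> \<not> (\<exists>i<k. x \<in> I i)"
    by (rule obtain_interval_decomposition_nonneg_Diff_UN) (rule that)
  have "{u, v} \<in> graph_complement V E \<longleftrightarrow> (\<exists>j<k + 1. tree_dist TN TE w (Inl u) (Inl v) \<in> J j)"
    if uv: "u \<in> V" "v \<in> V" "u \<noteq> v" for u v
  proof -
    have "Inl u \<in> TN" "Inl v \<in> TN"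
      using tree_leaves_subset[of TN TE] leaves uv(1,2) by auto
    then have "0 \<le> tree_dist TN TE w (Inl u) (Inl v)"
      by (rule tree_dist_nonneg[OF T])
    moreover have "{u, v} \<in> E \<longleftrightarrow> (\<exists>i<k. tree_dist TN TE w (Inl u) (Inl v) \<in> I i)"
      using E uv by blast
    ultimately show ?thesis
      unfolding doubleton_in_graph_complement_iff[OF uv] mem_J_iff by auto
  qed
  then have edges: "\<forall>u\<in>V. \<forall>v\<in>V. u \<noteq> v \<longrightarrow>
      ({u, v} \<in> graph_complement V E \<longleftrightarrow> (\<exists>j<k + 1. tree_dist TN TE w (Inl u) (Inl v) \<in> J j))"
    by blast
  show ?thesis
    unfolding k_interval_PCG_def
    by (intro conjI exI[of _ TN] exI[of _ TE] exI[of _ w] exI[of _ J])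
      (fact simple_graph_complement[OF G] T leaves intervals disjoint edges)+
qed

end
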